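(* Let $\kappa$ be a regular uncountable cardinal and $I$ an ideal on $\kappa$ with $I\subseteq NS_\kappa$, and let $L=\{\lambda+1:\lambda<\kappa\text{ a limit ordinal}\}$. Suppose $L\in P(I)$. Then for every stationary set $Q\subseteq\kappa$ consisting of limit ordinals there is $Y\subseteq L$ with $Y\in I$, $B(Y)\subseteq Q$, and $B(Y)$ stationary, where $B(Y)=\{\lambda:\lambda+1\in Y\}$.
   Context: An ideal on $\kappa$ is a family of subsets of $\kappa$ closed under subsets and finite unions, which is $<\kappa$-complete and contains all singletons. $NS_\kappa$ is the ideal of nonstationary subsets of $\kappa$. For $A\subseteq\kappa$ and $X_\alpha\subseteq\kappa$, $\bigtriangledown_{\alpha\in A}X_\alpha=\{\xi<\kappa:\exists\alpha<\xi\,(\alpha\in A\wedge \xi\in X_\alpha)\}$. An ideal is pleasant if whenever $A$ and all $X_\alpha$ belong to it, so does $\bigtriangledown_{\alpha\in A}X_\alpha$. The pleasant closure $P(I)$ is built in stages: $P_0(I)=I$; $P_{\beta+1}(I)$ is the ideal generated by $P_\beta(I)$ together with all $\bigtriangledown_{\alpha\in T}X_\alpha$ with $T\in I$ and each $X_\alpha\in P_\beta(I)$; unions at limit stages; $P(I)=\bigcup_\beta P_\beta(I)$ (the smallest pleasant ideal containing $I$). *)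

theory Defs
  imports Main "HOL-Library.Equipollence" "HOL-Library.Countable_Set"
begin

(* kappa is modelled as a well-ordered type 'a: its elements are the ordinals < kappa. *)

definition succ_ord :: "'a::wellorder \<Rightarrow> 'a" where
  "succ_ord x = (LEAST y. x < y)"

definition is_limit :: "'a::wellorder \<Rightarrow> bool" where
  "is_limit x \<longleftrightarrow> (\<exists>y. y < x) \<and> (\<forall>y<x. \<exists>z. y < z \<and> z < x)"

definition unbounded :: "'a::wellorder set \<Rightarrow> bool" where
  "unbounded C \<longleftrightarrow> (\<forall>a. \<exists>b\<in>C. a < b)"

definition closed_set :: "'a::wellorder set \<Rightarrow> bool" where
  "closed_set C \<longleftrightarrow> (\<forall>l. is_limit l \<and> (\<forall>a<l. \<exists>b\<in>C. a < b \<and> b < l) \<longrightarrow> l \<in> C)"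

definition club :: "'a::wellorder set \<Rightarrow> bool" where
  "club C \<longleftrightarrow> closed_set C \<and> unbounded C"

definition stationary :: "'a::wellorder set \<Rightarrow> bool" where
  "stationary S \<longleftrightarrow> (\<forall>C. club C \<longrightarrow> S \<inter> C \<noteq> {})"

definition NS :: "'a::wellorder set set" where
  "NS = {S. \<not> stationary S}"

definition ideal_on :: "'a::wellorder set set \<Rightarrow> bool" where
  "ideal_on I \<longleftrightarrow>
     (\<forall>A\<in>I. \<forall>B. B \<subseteq> A \<longrightarrow> B \<in> I) \<and>
     (\<forall>A\<in>I. \<forall>B\<in>I. A \<union> B \<in> I) \<and>
     (\<forall>F. F \<subseteq> I \<and> F \<prec> (UNIV :: 'a set) \<longrightarrow> \<Union>F \<in> I) \<and>
     (\<forall>x. {x} \<in> I)"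

definition diag_union :: "'a::wellorder set \<Rightarrow> ('a \<Rightarrow> 'a set) \<Rightarrow> 'a set" where
  "diag_union A X = {\<xi>. \<exists>a. a < \<xi> \<and> a \<in> A \<and> \<xi> \<in> X a}"

(* pleasant closure P(I): least family containing I, closed under the ideal-generating
   operations and under diagonal unions indexed by sets in I of members of the family;
   this equals the union of the transfinite stages P_beta(I). *)
inductive_set pcl :: "'a::wellorder set set \<Rightarrow> 'a set set" for I where
  base: "A \<in> I \<Longrightarrow> A \<in> pcl I"
| sub: "A \<in> pcl I \<Longrightarrow> B \<subseteq> A \<Longrightarrow> B \<in> pcl I"
| un2: "A \<in> pcl I \<Longrightarrow> B \<in> pcl I \<Longrightarrow> A \<union> B \<in> pcl I"
| un: "F \<prec> (UNIV :: 'a set) \<Longrightarrow> (\<forall>A\<in>F. A \<in> pcl I) \<Longrightarrow> \<Union>F \<in> pcl I"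
| diag: "T \<in> I \<Longrightarrow> (\<forall>a\<in>T. X a \<in> pcl I) \<Longrightarrow> diag_union T X \<in> pcl I"

definition Lset :: "'a::wellorder set" where
  "Lset = {succ_ord l | l. is_limit l}"

definition Bset :: "'a::wellorder set \<Rightarrow> 'a set" where
  "Bset Y = {l. succ_ord l \<in> Y}"

end

theory Submission
  imports Defs
begin

(* Say that A traces stationary sets into I if every stationary Q whose successors all lie in A
   has a stationary part B(Y) \<inter> Q with Y \<in> I. Members of I do so (take Y = A), and the property
   passes to subsets, to unions of fewer than \<kappa> sets (a stationary set is not the union of fewer
   than \<kappa> nonstationary sets) and to diagonal unions indexed by T \<in> I: if \<lambda> + 1 \<in> X (h \<lambda>) with
   h \<lambda> \<le> \<lambda> and h \<lambda> \<in> T, the fixed points of h lie in the nonstationary set T, so h is regressive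
   on a stationary set and Fodor's lemma makes it constant on a stationary set. Hence L \<in> P(I)
   traces stationary sets into I, and shrinking Y to successors of points of Q gives the theorem. *)

lemma less_succ_ord_imp_le: "y < succ_ord x \<Longrightarrow> y \<le> x"
  unfolding succ_ord_def by (metis not_le_imp_less not_less_Least)

lemma stationary_mono: "stationary S \<Longrightarrow> S \<subseteq> S' \<Longrightarrow> stationary S'"
  unfolding stationary_def by blast

lemma Bset_Int_image_succ_ord:
  fixes Q :: "'a::wellorder set"
  assumes "inj (succ_ord :: 'a \<Rightarrow> 'a)"
  shows "Bset (Y \<inter> succ_ord ` Q) = Bset Y \<inter> Q"
  unfolding Bset_def using inj_image_mem_iff[OF assms] by blast

lemma closed_diagonal_Inter:
  assumes "\<And>a. closed_set (C a)"
  shows "closed_set {\<xi>. \<beta> < \<xi> \<and> (\<forall>a<\<xi>. \<xi> \<in> C a)}" (is "closed_set ?D")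
  unfolding closed_set_def
proof (intro allI impI)
  fix l assume l: "is_limit l \<and> (\<forall>a<l. \<exists>b\<in>?D. a < b \<and> b < l)"
  then obtain b where "b \<in> ?D" "b < l" unfolding is_limit_def by blast
  then have "\<beta> < l" by auto
  moreover have "l \<in> C a" if "a < l" for a
  proof -
    have "\<exists>c\<in>C a. a' < c \<and> c < l" if "a' < l" for a'
    proof -
      have "max a a' < l" using \<open>a < l\<close> \<open>a' < l\<close> by simp
      then obtain b where "b \<in> ?D" "max a a' < b" "b < l" using l by blast
      then show ?thesis by auto
    qed
    then show ?thesis using assms l unfolding closed_set_def by blast
  qed
  ultimately show "l \<in> ?D" by blast
qed

definition traces_stationary :: "'a::wellorder set set \<Rightarrow> 'a set \<Rightarrow> bool" where
  "traces_stationary I A \<longleftrightarrow>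
     (\<forall>Q. stationary Q \<and> (\<forall>q\<in>Q. succ_ord q \<in> A) \<longrightarrow> (\<exists>Y\<in>I. stationary (Bset Y \<inter> Q)))"

lemma traces_stationaryD:
  assumes "traces_stationary I A" "stationary Q'" "Q' \<subseteq> Q" "\<forall>q\<in>Q'. succ_ord q \<in> A"
  shows "\<exists>Y\<in>I. stationary (Bset Y \<inter> Q)"
proof -
  obtain Y where "Y \<in> I" "stationary (Bset Y \<inter> Q')"
    using assms(1,2,4) unfolding traces_stationary_def by blast
  then show ?thesis using assms(3) stationary_mono[of "Bset Y \<inter> Q'"] by blast
qed

lemma traces_stationary_base:
  assumes "A \<in> I"
  shows "traces_stationary I A"
  unfolding traces_stationary_def
proof (intro allI impI)
  fix Q assume Q: "stationary Q \<and> (\<forall>q\<in>Q. succ_ord q \<in> A)"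
  then have "Bset A \<inter> Q = Q" unfolding Bset_def by blast
  then show "\<exists>Y\<in>I. stationary (Bset Y \<inter> Q)" using assms Q by metis
qed

lemma traces_stationary_subset: "traces_stationary I A \<Longrightarrow> B \<subseteq> A \<Longrightarrow> traces_stationary I B"
  unfolding traces_stationary_def by blast

context
  assumes uncountable: "uncountable (UNIV :: 'a::wellorder set)"
    and cardinal: "\<forall>x::'a. {..<x} \<prec> (UNIV :: 'a set)"
    and regular: "\<forall>A::'a set. A \<prec> (UNIV :: 'a set) \<longrightarrow> (\<exists>x. \<forall>y\<in>A. y < x)"
begin

lemma countable_lesspoll_UNIV:
  assumes "countable A"
  shows "A \<prec> (UNIV::'a set)"
proof -
  have "A \<lesssim> (UNIV::nat set)" using assms unfolding countable_def lepoll_def by blast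
  also have "(UNIV::nat set) \<lesssim> (UNIV::'a set)"
    using uncountable countable_finite infinite_le_lepoll by blast
  finally have "A \<lesssim> (UNIV::'a set)" .
  moreover have "\<not> A \<approx> (UNIV::'a set)"
    using countable_eqpoll[OF assms eqpoll_sym] uncountable by blast
  ultimately show ?thesis unfolding lesspoll_def by blast
qed

lemma ex_greater: "\<exists>y. (x::'a) < y"
proof -
  have "{x} \<prec> (UNIV::'a set)" by (simp add: countable_lesspoll_UNIV)
  then show ?thesis using regular by blast
qed

lemma less_succ_ord: "(x::'a) < succ_ord x"
  unfolding succ_ord_def by (rule LeastI_ex) (rule ex_greater)

lemma inj_succ_ord: "inj (succ_ord :: 'a \<Rightarrow> 'a)"
  by (rule injI) (metis antisym less_succ_ord less_succ_ord_imp_le)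

lemma atMost_lesspoll_UNIV: "{..x::'a} \<prec> (UNIV::'a set)"
proof -
  have "{..x} = {..<succ_ord x}"
    using less_succ_ord less_succ_ord_imp_le by (auto intro: le_less_trans)
  then show ?thesis using cardinal by simp
qed

lemma club_UNIV: "club (UNIV::'a set)"
  unfolding club_def closed_set_def unbounded_def using ex_greater by auto

lemma stationary_nonempty: "stationary (S::'a set) \<Longrightarrow> S \<noteq> {}"
  using club_UNIV unfolding stationary_def by blast

lemma increasing_seq_has_limit_sup:
  assumes increasing: "\<And>n. (s::nat \<Rightarrow> 'a) n < s (Suc n)"
  obtains l where "\<And>n. s n < l" "\<And>b. b < l \<Longrightarrow> \<exists>n. b \<le> s n" "is_limit l"
proof -
  have "range s \<prec> (UNIV::'a set)" by (simp add: countable_lesspoll_UNIV)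
  then have bounded: "\<exists>x. \<forall>n. s n < x" using regular by blast
  define l where "l = (LEAST x. \<forall>n. s n < x)"
  have above: "s n < l" for n using LeastI_ex[OF bounded] unfolding l_def by blast
  have cofinal: "\<exists>n. b \<le> s n" if "b < l" for b
  proof (rule ccontr)
    assume "\<nexists>n. b \<le> s n"
    then have "l \<le> b" unfolding l_def by (simp add: Least_le not_le)
    then show False using that by simp
  qed
  have "is_limit l"
    unfolding is_limit_def
  proof (intro conjI allI impI)
    show "\<exists>y. y < l" using above by blast
    fix y assume "y < l"
    then obtain n where "y \<le> s n" using cofinal by blast
    then have "y < s (Suc n)" using increasing[of n] by simp
    then show "\<exists>z>y. z < l" using above by blast
  qed
  then show ?thesis using that above cofinal by blast
qed

lemma ex_bound_meeting_clubs:
  assumes C: "\<And>b. club ((C::'a \<Rightarrow> 'a set) b)"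
  shows "\<exists>y. x < y \<and> (\<forall>b\<le>x. \<exists>c\<in>C b. x < c \<and> c < y)"
proof -
  have "\<forall>b. \<exists>c\<in>C b. x < c" using C unfolding club_def unbounded_def by blast
  then obtain c where c: "\<And>b. c b \<in> C b \<and> x < c b" by metis
  have "c ` {..x} \<prec> (UNIV::'a set)" by (rule lesspoll_trans1[OF image_lepoll atMost_lesspoll_UNIV])
  then obtain y where y: "\<forall>z\<in>c ` {..x}. z < y" using regular by blast
  then have "c b < y" if "b \<le> x" for b using that by simp
  moreover have "x < y" using calculation[of x] c[of x] less_trans by blast
  ultimately show ?thesis using c by blast
qed

lemma unbounded_diagonal_Inter:
  assumes C: "\<And>a. club ((C::'a \<Rightarrow> 'a set) a)"
  shows "unbounded {\<xi>. \<beta> < \<xi> \<and> (\<forall>a<\<xi>. \<xi> \<in> C a)}"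
  unfolding unbounded_def
proof
  fix a0
  have "\<forall>x. \<exists>y. x < y \<and> (\<forall>b\<le>x. \<exists>c\<in>C b. x < c \<and> c < y)"
    by (intro allI ex_bound_meeting_clubs[OF C])
  then have "\<exists>nx. \<forall>x. x < nx x \<and> (\<forall>b\<le>x. \<exists>c\<in>C b. x < c \<and> c < nx x)"
    by (rule choice)
  then obtain nx where nx: "\<And>x. x < nx x \<and> (\<forall>b\<le>x. \<exists>c\<in>C b. x < c \<and> c < nx x)"
    by blast
  \<comment> \<open>each step passes a point of every C b below the previous one, so the supremum of
      the steps is a limit point of each C a with a below it\<close>
  define s where "s n = (nx ^^ n) (max a0 \<beta>)" for n
  have s_Suc: "s (Suc n) = nx (s n)" for n unfolding s_def by simp
  have increasing: "s n < s (Suc n)" for n using nx s_Suc by simp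
  then obtain l where above: "\<And>n. s n < l" and cofinal: "\<And>b. b < l \<Longrightarrow> \<exists>n. b \<le> s n"
      and "is_limit l"
    using increasing_seq_has_limit_sup by blast
  have "mono s" using increasing by (simp add: mono_iff_le_Suc less_imp_le)
  have "l \<in> C a" if "a < l" for a
  proof -
    have "\<exists>c\<in>C a. a' < c \<and> c < l" if "a' < l" for a'
    proof -
      obtain n1 n2 where "a \<le> s n1" "a' \<le> s n2" using cofinal \<open>a < l\<close> \<open>a' < l\<close> by blast
      moreover have "s n1 \<le> s (max n1 n2)" "s n2 \<le> s (max n1 n2)"
        using \<open>mono s\<close> by (simp_all add: monoD)
      ultimately have "a \<le> s (max n1 n2)" "a' \<le> s (max n1 n2)" by simp_all
      then obtain c where "c \<in> C a" "a' < c" "c < s (Suc (max n1 n2))"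
        using nx[of "s (max n1 n2)"] s_Suc by fastforce
      then show ?thesis using above[of "Suc (max n1 n2)"] by auto
    qed
    moreover have "closed_set (C a)" using C club_def by blast
    ultimately show ?thesis using \<open>is_limit l\<close> unfolding closed_set_def by blast
  qed
  moreover have "\<beta> < l" "a0 < l" using above[of 0] by (simp_all add: s_def)
  ultimately show "\<exists>\<xi>\<in>{\<xi>. \<beta> < \<xi> \<and> (\<forall>a<\<xi>. \<xi> \<in> C a)}. a0 < \<xi>" by blast
qed

lemma club_diagonal_Inter:
  assumes "\<And>a. club ((C::'a \<Rightarrow> 'a set) a)"
  shows "club {\<xi>. \<beta> < \<xi> \<and> (\<forall>a<\<xi>. \<xi> \<in> C a)}"
  unfolding club_def
proof
  show "closed_set {\<xi>. \<beta> < \<xi> \<and> (\<forall>a<\<xi>. \<xi> \<in> C a)}"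
    using assms by (intro closed_diagonal_Inter) (simp add: club_def)
  show "unbounded {\<xi>. \<beta> < \<xi> \<and> (\<forall>a<\<xi>. \<xi> \<in> C a)}"
    using assms by (rule unbounded_diagonal_Inter)
qed

lemma pressing_down:
  assumes S: "stationary (S::'a set)" and regressive: "\<And>\<xi>. \<xi> \<in> S \<Longrightarrow> \<beta> < \<xi> \<Longrightarrow> f \<xi> < \<xi>"
  shows "\<exists>a. stationary {\<xi>\<in>S. f \<xi> = a}"
proof (rule ccontr)
  assume "\<not> ?thesis"
  then have "\<forall>a. \<exists>C. club C \<and> {\<xi>\<in>S. f \<xi> = a} \<inter> C = {}" unfolding stationary_def by blast
  then have "\<exists>C. \<forall>a. club (C a) \<and> {\<xi>\<in>S. f \<xi> = a} \<inter> C a = {}" by (rule choice)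
  then obtain C where C: "\<forall>a. club (C a) \<and> {\<xi>\<in>S. f \<xi> = a} \<inter> C a = {}" by blast
  then have "club {\<xi>. \<beta> < \<xi> \<and> (\<forall>a<\<xi>. \<xi> \<in> C a)}" by (simp add: club_diagonal_Inter)
  then obtain \<xi> where "\<xi> \<in> S" "\<beta> < \<xi>" "\<forall>a<\<xi>. \<xi> \<in> C a"
    using S unfolding stationary_def by blast
  then have "\<xi> \<in> {\<xi>'\<in>S. f \<xi>' = f \<xi>} \<inter> C (f \<xi>)" using regressive by simp
  then show False using C by blast
qed

lemma stationary_Union_lesspoll:
  fixes F :: "'a set set"
  assumes F: "F \<prec> (UNIV::'a set)" and S: "stationary (\<Union>F)"
  shows "\<exists>A\<in>F. stationary A"
proof -
  obtain g :: "'a set \<Rightarrow> 'a" where g: "inj_on g F"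
    using lesspoll_imp_lepoll[OF F] unfolding lepoll_def by blast
  have "g ` F \<prec> (UNIV::'a set)" by (rule lesspoll_trans1[OF image_lepoll F])
  then obtain \<beta> where \<beta>: "\<forall>y\<in>g ` F. y < \<beta>" using regular by blast
  have "\<forall>\<xi>\<in>\<Union>F. \<exists>A. A \<in> F \<and> \<xi> \<in> A" by blast
  then have "\<exists>h. \<forall>\<xi>\<in>\<Union>F. h \<xi> \<in> F \<and> \<xi> \<in> h \<xi>" by (rule bchoice)
  then obtain h where h: "\<And>\<xi>. \<xi> \<in> \<Union>F \<Longrightarrow> h \<xi> \<in> F \<and> \<xi> \<in> h \<xi>" by blast
  have "g (h \<xi>) < \<xi>" if "\<xi> \<in> \<Union>F" "\<beta> < \<xi>" for \<xi>
    using h[OF that(1)] \<beta> that(2) less_trans by blast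
  then obtain a where a: "stationary {\<xi>\<in>\<Union>F. g (h \<xi>) = a}"
    using pressing_down[OF S, of \<beta> "\<lambda>\<xi>. g (h \<xi>)"] by blast
  then obtain \<xi>0 where \<xi>0: "\<xi>0 \<in> \<Union>F" "g (h \<xi>0) = a" using stationary_nonempty by blast
  have "{\<xi>\<in>\<Union>F. g (h \<xi>) = a} \<subseteq> h \<xi>0"
  proof
    fix \<xi> assume \<xi>: "\<xi> \<in> {\<xi>\<in>\<Union>F. g (h \<xi>) = a}"
    then have "h \<xi> = h \<xi>0" using inj_onD[OF g] h \<xi>0 by auto
    then show "\<xi> \<in> h \<xi>0" using h \<xi> by force
  qed
  then show ?thesis using a h[OF \<xi>0(1)] stationary_mono by blast
qed

lemma stationary_Un_nonstationary:
  assumes "stationary ((A::'a set) \<union> B)" "\<not> stationary A"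
  shows "stationary B"
proof -
  have "{A, B} \<prec> (UNIV::'a set)" by (simp add: countable_lesspoll_UNIV)
  then show ?thesis using stationary_Union_lesspoll[of "{A, B}"] assms by auto
qed

lemma traces_stationary_Union:
  fixes F :: "'a set set"
  assumes F: "F \<prec> (UNIV::'a set)" and traces: "\<forall>A\<in>F. traces_stationary I A"
  shows "traces_stationary I (\<Union>F)"
  unfolding traces_stationary_def
proof (intro allI impI)
  fix Q assume Q: "stationary Q \<and> (\<forall>q\<in>Q. succ_ord q \<in> \<Union>F)"
  define part where "part A = {q\<in>Q. succ_ord q \<in> A}" for A
  have "part ` F \<prec> (UNIV::'a set)" by (rule lesspoll_trans1[OF image_lepoll F])
  moreover have "Q \<subseteq> \<Union>(part ` F)" using Q unfolding part_def by blast
  then have "stationary (\<Union>(part ` F))" using Q stationary_mono by blast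
  ultimately obtain A where "A \<in> F" "stationary (part A)"
    using stationary_Union_lesspoll[of "part ` F"] by blast
  then show "\<exists>Y\<in>I. stationary (Bset Y \<inter> Q)"
    using traces traces_stationaryD[of I A "part A" Q] unfolding part_def by blast
qed

lemma traces_stationary_diag_union:
  fixes I :: "'a set set"
  assumes I_NS: "I \<subseteq> NS" and T: "T \<in> I" and traces: "\<forall>a\<in>T. traces_stationary I (X a)"
  shows "traces_stationary I (diag_union T X)"
  unfolding traces_stationary_def
proof (intro allI impI)
  fix Q assume Q: "stationary Q \<and> (\<forall>q\<in>Q. succ_ord q \<in> diag_union T X)"
  then have "\<forall>q\<in>Q. \<exists>a. a < succ_ord q \<and> a \<in> T \<and> succ_ord q \<in> X a"
    unfolding diag_union_def by blast
  then have "\<exists>h. \<forall>q\<in>Q. h q < succ_ord q \<and> h q \<in> T \<and> succ_ord q \<in> X (h q)"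
    by (rule bchoice)
  then obtain h where h: "\<And>q. q \<in> Q \<Longrightarrow> h q < succ_ord q \<and> h q \<in> T \<and> succ_ord q \<in> X (h q)"
    by blast
  have "{q\<in>Q. h q = q} \<subseteq> T" using h by force
  moreover have "\<not> stationary T" using I_NS T unfolding NS_def by blast
  ultimately have "\<not> stationary {q\<in>Q. h q = q}" using stationary_mono by blast
  moreover have "h q \<le> q" if "q \<in> Q" for q using h[OF that] less_succ_ord_imp_le by blast
  then have "Q \<subseteq> {q\<in>Q. h q = q} \<union> {q\<in>Q. h q < q}" using le_neq_trans by blast
  then have "stationary ({q\<in>Q. h q = q} \<union> {q\<in>Q. h q < q})" using Q stationary_mono by blast
  ultimately have "stationary {q\<in>Q. h q < q}" using stationary_Un_nonstationary by blast
  then have "\<exists>a. stationary {q\<in>{q\<in>Q. h q < q}. h q = a}" by (rule pressing_down) auto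
  then obtain a where a: "stationary {q\<in>{q\<in>Q. h q < q}. h q = a}" by blast
  then obtain q0 where "q0 \<in> Q" "h q0 = a" using stationary_nonempty by blast
  then have "a \<in> T" using h by blast
  have "\<forall>q\<in>{q\<in>{q\<in>Q. h q < q}. h q = a}. succ_ord q \<in> X a" using h by auto
  then show "\<exists>Y\<in>I. stationary (Bset Y \<inter> Q)"
    using traces_stationaryD[OF traces[rule_format, OF \<open>a \<in> T\<close>] a] by blast
qed

lemma traces_stationary_pcl:
  assumes "I \<subseteq> NS" "(A::'a set) \<in> pcl I"
  shows "traces_stationary I A"
  using assms(2)
proof (induction rule: pcl.induct)
  case (base A)
  then show ?case by (rule traces_stationary_base)
next
  case (sub A B)
  then show ?case using traces_stationary_subset by blast
next
  case (un2 A B)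
  have "{A, B} \<prec> (UNIV::'a set)" by (simp add: countable_lesspoll_UNIV)
  then show ?case using traces_stationary_Union[of "{A, B}"] un2.IH by simp
next
  case (un F)
  then show ?case by (intro traces_stationary_Union) auto
next
  case (diag T X)
  then show ?case using traces_stationary_diag_union[OF assms(1)] by blast
qed

end

theorem theorem3p12:
  fixes I :: "'a::wellorder set set"
  assumes uncountable: "uncountable (UNIV :: 'a set)"
    and cardinal: "\<forall>x::'a. {..<x} \<prec> (UNIV :: 'a set)"
    and regular: "\<forall>A::'a set. A \<prec> (UNIV :: 'a set) \<longrightarrow> (\<exists>x. \<forall>y\<in>A. y < x)"
    and ideal: "ideal_on I"
    and I_NS: "I \<subseteq> NS"
    and L_in: "Lset \<in> pcl I"
  shows "\<forall>Q. stationary Q \<and> (\<forall>q\<in>Q. is_limit q) \<longrightarrow>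
           (\<exists>Y. Y \<subseteq> Lset \<and> Y \<in> I \<and> Bset Y \<subseteq> Q \<and> stationary (Bset Y))"
proof (intro allI impI)
  fix Q :: "'a set"
  assume "stationary Q \<and> (\<forall>q\<in>Q. is_limit q)"
  then have Q: "stationary Q" and succ_Q: "\<forall>q\<in>Q. succ_ord q \<in> Lset"
    unfolding Lset_def by blast+
  have "traces_stationary I Lset"
    using traces_stationary_pcl[OF uncountable cardinal regular I_NS L_in] .
  then obtain Y where Y: "Y \<in> I" "stationary (Bset Y \<inter> Q)"
    using traces_stationaryD[OF _ Q order_refl succ_Q] by blast
  have "Y \<inter> succ_ord ` Q \<subseteq> Lset" using succ_Q by auto
  moreover have "\<forall>A\<in>I. \<forall>B. B \<subseteq> A \<longrightarrow> B \<in> I" using ideal unfolding ideal_on_def by (rule conjunct1)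
  then have "Y \<inter> succ_ord ` Q \<in> I" using Y(1) by blast
  moreover have "Bset (Y \<inter> succ_ord ` Q) = Bset Y \<inter> Q"
    using Bset_Int_image_succ_ord[OF inj_succ_ord[OF uncountable cardinal regular]] .
  ultimately show "\<exists>Y. Y \<subseteq> Lset \<and> Y \<in> I \<and> Bset Y \<subseteq> Q \<and> stationary (Bset Y)"
    using Y(2) by (metis inf_le2)
qed

end
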